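(* Let $n_1<n_2<n_3$ be positive integers with $\gcd(n_1,n_2,n_3)=1$ minimally generating a nonsymmetric numerical semigroup $S$, with $\gcd(\delta_1,\delta_3)=1$. Let $\mathbf x\in\{\boldsymbol\lambda,\boldsymbol\mu\}$ and let $1\le i\le\max\{\delta_1,\delta_3\}$ be such that the B\'ezout couple $\mathbf x_i$ (of type $\mathbf x$) is reducible. Then there exists a positive integer $l<i$ such that $\tau_{\mathbf x_l}^+\le\tau_{\mathbf x_i}^+$ (componentwise), where $\mathbf x_l$ is the B\'ezout couple of $l$ of the same type.
   Context: $S=\langle n_1,n_2,n_3\rangle$; minimally generated means no $n_i$ lies in the submonoid generated by the other two; $S$ is symmetric if, with $F=\max(\mathbb Z\setminus S)$, $x\in\mathbb Z\setminus S$ implies $F-x\in S$. For $\{i,j,k\}=\{1,2,3\}$, $c_i=\min\{c\in\mathbb Z^+: cn_i\in\langle n_j,n_k\rangle\}$ and, $S$ being nonsymmetric, $r_{ij},r_{ik}$ are the unique positive integers with $c_in_i=r_{ij}n_j+r_{ik}n_k$; moreover $c_i=r_{ji}+r_{ki}$. Set $\delta_1=c_1-r_{12}-r_{13}>0$, $\delta_3=r_{31}+r_{32}-c_3>0$, $\mathbf v_1=(c_1,-r_{12},-r_{13})$, $\mathbf v_3=(r_{31},r_{32},-c_3)$. For $i\in\{1,\ldots,\max\{\delta_1,\delta_3\}\}$: $\boldsymbol\lambda_i$ is the unique $(a,b)\in\mathbb Z^2$ with $a\delta_1+b\delta_3=i$, $0<b\le\delta_1$; $\boldsymbol\mu_i$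 is the unique $(a,b)$ with $a\delta_1+b\delta_3=i$, $0<a\le\delta_3$. $\boldsymbol\lambda_i$ is reducible if $\boldsymbol\lambda_i=\boldsymbol\lambda_j+\boldsymbol\lambda_k$ for some $j,k\in\{1,\ldots,\max\{\delta_1,\delta_3\}\}$, and similarly for $\boldsymbol\mu_i$. For $(a,b)\in\mathbb Z^2$, $\tau_{(a,b)}=a\mathbf v_1+b\mathbf v_3\in\mathbb Z^3$. For $\mathbf z\in\mathbb Z^3$, $\mathbf z^+,\mathbf z^-\in\mathbb N^3$ are the unique vectors with $\mathbf z=\mathbf z^+-\mathbf z^-$ and $\mathbf z^+\cdot\mathbf z^-=0$. *)

theory Defs
  imports Main
begin

definition sg3 :: "nat \<Rightarrow> nat \<Rightarrow> nat \<Rightarrow> int set" where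
  "sg3 n1 n2 n3 = {int (a*n1 + b*n2 + c*n3) | a b c. True}"

definition gen2 :: "nat \<Rightarrow> nat \<Rightarrow> nat set" where
  "gen2 a b = {x*a + y*b | x y. True}"

definition minimally_generated :: "nat \<Rightarrow> nat \<Rightarrow> nat \<Rightarrow> bool" where
  "minimally_generated n1 n2 n3 \<longleftrightarrow>
     n1 \<notin> gen2 n2 n3 \<and> n2 \<notin> gen2 n1 n3 \<and> n3 \<notin> gen2 n1 n2"

definition symmetric_sg :: "int set \<Rightarrow> bool" where
  "symmetric_sg S \<longleftrightarrow> (\<forall>x. x \<notin> S \<longrightarrow> (GREATEST y. y \<notin> S) - x \<in> S)"

definition cc :: "nat \<Rightarrow> nat \<Rightarrow> nat \<Rightarrow> nat" where
  "cc ni nj nk = (LEAST c. 0 < c \<and> c * ni \<in> gen2 nj nk)"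

definition rr :: "nat \<Rightarrow> nat \<Rightarrow> nat \<Rightarrow> nat \<times> nat" where
  "rr ni nj nk = (THE (a, b). 0 < a \<and> 0 < b \<and> cc ni nj nk * ni = a * nj + b * nk)"

definition delta1 :: "nat \<Rightarrow> nat \<Rightarrow> nat \<Rightarrow> int" where
  "delta1 n1 n2 n3 = int (cc n1 n2 n3) - int (fst (rr n1 n2 n3)) - int (snd (rr n1 n2 n3))"

definition delta3 :: "nat \<Rightarrow> nat \<Rightarrow> nat \<Rightarrow> int" where
  "delta3 n1 n2 n3 = int (fst (rr n3 n1 n2)) + int (snd (rr n3 n1 n2)) - int (cc n3 n1 n2)"

definition v1 :: "nat \<Rightarrow> nat \<Rightarrow> nat \<Rightarrow> int \<times> int \<times> int" where
  "v1 n1 n2 n3 = (int (cc n1 n2 n3), - int (fst (rr n1 n2 n3)), - int (snd (rr n1 n2 n3)))"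

definition v3 :: "nat \<Rightarrow> nat \<Rightarrow> nat \<Rightarrow> int \<times> int \<times> int" where
  "v3 n1 n2 n3 = (int (fst (rr n3 n1 n2)), int (snd (rr n3 n1 n2)), - int (cc n3 n1 n2))"

definition lam :: "nat \<Rightarrow> nat \<Rightarrow> nat \<Rightarrow> int \<Rightarrow> int \<times> int" where
  "lam n1 n2 n3 i = (THE (a, b). a * delta1 n1 n2 n3 + b * delta3 n1 n2 n3 = i
                        \<and> 0 < b \<and> b \<le> delta1 n1 n2 n3)"

definition mu :: "nat \<Rightarrow> nat \<Rightarrow> nat \<Rightarrow> int \<Rightarrow> int \<times> int" where
  "mu n1 n2 n3 i = (THE (a, b). a * delta1 n1 n2 n3 + b * delta3 n1 n2 n3 = i
                        \<and> 0 < a \<and> a \<le> delta3 n1 n2 n3)"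

definition reducible :: "(int \<Rightarrow> int \<times> int) \<Rightarrow> int \<Rightarrow> int \<Rightarrow> bool" where
  "reducible x m i \<longleftrightarrow> (\<exists>j\<in>{1..m}. \<exists>k\<in>{1..m}.
      x i = (fst (x j) + fst (x k), snd (x j) + snd (x k)))"

definition tau :: "nat \<Rightarrow> nat \<Rightarrow> nat \<Rightarrow> int \<times> int \<Rightarrow> int \<times> int \<times> int" where
  "tau n1 n2 n3 ab = (case ab of (a, b) \<Rightarrow>
     (case v1 n1 n2 n3 of (p1, p2, p3) \<Rightarrow> case v3 n1 n2 n3 of (q1, q2, q3) \<Rightarrow>
        (a*p1 + b*q1, a*p2 + b*q2, a*p3 + b*q3)))"

definition pos_part :: "int \<times> int \<times> int \<Rightarrow> int \<times> int \<times> int" where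
  "pos_part z = (case z of (a, b, c) \<Rightarrow> (max a 0, max b 0, max c 0))"

definition le3 :: "int \<times> int \<times> int \<Rightarrow> int \<times> int \<times> int \<Rightarrow> bool" where
  "le3 y z \<longleftrightarrow> fst y \<le> fst z \<and> fst (snd y) \<le> fst (snd z) \<and> snd (snd y) \<le> snd (snd z)"

end

theory Submission
  imports Defs "HOL-Library.Product_Plus"
begin

text \<open>If \<open>c\<^sub>i n\<^sub>i\<close> were a multiple of a single other generator, \<open>S\<close> would be a gluing and hence
  symmetric; so in the nonsymmetric case all \<open>r\<^sub>i\<^sub>j\<close> are positive, and \<open>n\<^sub>1 < n\<^sub>2 < n\<^sub>3\<close> then gives
  \<open>\<delta>\<^sub>1, \<delta>\<^sub>3 > 0\<close> together with \<open>\<delta>\<^sub>3 r\<^sub>1\<^sub>3 \<le> \<delta>\<^sub>1 c\<^sub>3\<close> and \<open>\<delta>\<^sub>1 r\<^sub>3\<^sub>1 \<le> \<delta>\<^sub>3 c\<^sub>1\<close>. A couple \<open>\<lambda>\<^sub>t = (a, b)\<close> with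
  \<open>1 \<le> t \<le> max \<delta>\<^sub>1 \<delta>\<^sub>3\<close> has \<open>a \<le> 0 < b\<close>, and these inequalities make the second coordinate of
  \<open>\<tau>\<^bsub>\<lambda>\<^sub>t\<^esub>\<close> nonnegative and the third nonpositive; symmetrically, \<open>\<tau>\<^bsub>\<mu>\<^sub>t\<^esub>\<close> has nonnegative first and
  nonpositive second coordinate. If \<open>x\<^sub>i = x\<^sub>j + x\<^sub>k\<close> then \<open>i = j + k\<close> and
  \<open>\<tau>\<^bsub>x\<^sub>i\<^esub> = \<tau>\<^bsub>x\<^sub>j\<^esub> + \<tau>\<^bsub>x\<^sub>k\<^esub>\<close>; as the two summands agree in sign in two coordinates, the positive
  part of one of them is dominated by that of the sum.\<close>

lemma gen2_commute: "gen2 a b = gen2 b a"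
  unfolding gen2_def by (auto; metis add.commute)

lemma cc_commute: "cc x y z = cc x z y"
  unfolding cc_def by (simp add: gen2_commute)

lemma sg3_swap12: "sg3 a b c = sg3 b a c"
  unfolding sg3_def by (auto; metis add.commute)

lemma sg3_swap23: "sg3 a b c = sg3 a c b"
  unfolding sg3_def by (auto; metis add.commute add.assoc)

lemma cc_pos_mem_gen2:
  assumes "0 < y"
  shows "0 < cc x y z \<and> cc x y z * x \<in> gen2 y z"
proof -
  have "0 < y \<and> y * x \<in> gen2 y z"
    using assms unfolding gen2_def by (auto intro: exI[of _ x] exI[of _ 0])
  then show ?thesis
    unfolding cc_def by (rule LeastI)
qed

lemma not_mem_gen2_below_cc: "0 < c \<Longrightarrow> c < cc x y z \<Longrightarrow> c * x \<notin> gen2 y z"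
  unfolding cc_def using not_less_Least by blast

lemma cc_le: "0 < c \<Longrightarrow> c * x \<in> gen2 y z \<Longrightarrow> cc x y z \<le> c"
  unfolding cc_def by (rule Least_le) simp

lemma sg3_memI:
  fixes A B C :: int
  assumes "0 \<le> A" "0 \<le> B" "0 \<le> C"
  shows "A * int x + B * int y + C * int z \<in> sg3 x y z"
  unfolding sg3_def
  by (rule CollectI, rule exI[of _ "nat A"], rule exI[of _ "nat B"], rule exI[of _ "nat C"])
    (use assms in simp)

lemma sg3_nonneg: "w \<in> sg3 x y z \<Longrightarrow> 0 \<le> w"
  unfolding sg3_def by auto

lemma sg3_E:
  assumes "w \<in> sg3 x y z"
  obtains A B C :: nat where "w = int A * int x + int B * int y + int C * int z"
  using assms unfolding sg3_def by auto

section \<open>Gluings are symmetric\<close>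

lemma lincomb_bounded_coeff:
  fixes p q w :: int
  assumes "0 < q" "coprime p q"
  obtains \<alpha> \<beta> where "w = \<alpha> * p + \<beta> * q" "0 \<le> \<alpha>" "\<alpha> < q"
proof -
  obtain u v where uv: "u * p + v * q = 1"
    using assms(2) by (metis bezout_int coprime_iff_gcd_eq_1)
  define \<alpha> where "\<alpha> = (w * u) mod q"
  have qr: "w * u = \<alpha> + q * (w * u div q)"
    unfolding \<alpha>_def by simp
  have "w = w * (u * p + v * q)"
    using uv by simp
  also have "\<dots> = (w * u) * p + w * v * q"
    by (simp add: algebra_simps)
  also have "\<dots> = \<alpha> * p + (w * v + (w * u div q) * p) * q"
    by (subst qr) (simp add: algebra_simps)
  finally show ?thesis
    using that assms(1) unfolding \<alpha>_def by simp
qed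

lemma eq_if_dvd_diff_in_range:
  fixes a b q :: int
  assumes "q dvd a - b" "0 \<le> a" "a < q" "0 \<le> b" "b < q"
  shows "a = b"
  using assms by (metis mod_eq_dvd_iff mod_pos_pos_trivial)

lemma normal_form_exists:
  fixes D X' Y' Z w :: int
  assumes "0 < D" "0 < Y'" "coprime Z D" "coprime X' Y'"
  obtains \<alpha> \<beta> \<gamma> where "w = \<alpha> * (D * X') + \<beta> * (D * Y') + \<gamma> * Z"
    "0 \<le> \<alpha>" "\<alpha> < Y'" "0 \<le> \<gamma>" "\<gamma> < D"
proof -
  obtain \<gamma> t where w: "w = \<gamma> * Z + t * D" "0 \<le> \<gamma>" "\<gamma> < D"
    using lincomb_bounded_coeff[OF assms(1,3)] .
  obtain \<alpha> \<beta> where t: "t = \<alpha> * X' + \<beta> * Y'" "0 \<le> \<alpha>" "\<alpha> < Y'"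
    using lincomb_bounded_coeff[OF assms(2,4)] .
  show ?thesis
    by (rule that[of \<alpha> \<beta> \<gamma>]) (use w t in \<open>simp_all add: algebra_simps\<close>)
qed

lemma normal_form_unique:
  fixes D X' Y' Z :: int
  assumes "0 < D" "coprime Z D" "coprime X' Y'"
    and eq: "\<alpha> * (D * X') + \<beta> * (D * Y') + \<gamma> * Z = \<alpha>' * (D * X') + \<beta>' * (D * Y') + \<gamma>' * Z"
    and "0 \<le> \<alpha>" "\<alpha> < Y'" "0 \<le> \<gamma>" "\<gamma> < D" "0 \<le> \<alpha>'" "\<alpha>' < Y'" "0 \<le> \<gamma>'" "\<gamma>' < D"
  shows "\<alpha> = \<alpha>' \<and> \<beta> = \<beta>' \<and> \<gamma> = \<gamma>'"
proof -
  have "(\<gamma> - \<gamma>') * Z = D * ((\<alpha>' - \<alpha>) * X' + (\<beta>' - \<beta>) * Y')"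
    using eq by (simp add: algebra_simps)
  then have "D dvd (\<gamma> - \<gamma>') * Z"
    by simp
  then have "D dvd \<gamma> - \<gamma>'"
    using assms(2) by (simp add: coprime_commute coprime_dvd_mult_left_iff)
  then have \<gamma>: "\<gamma> = \<gamma>'"
    using eq_if_dvd_diff_in_range assms by blast
  then have "D * ((\<alpha> - \<alpha>') * X') = D * ((\<beta>' - \<beta>) * Y')"
    using eq by (simp add: algebra_simps)
  then have XY: "(\<alpha> - \<alpha>') * X' = (\<beta>' - \<beta>) * Y'"
    using assms(1) by simp
  then have "Y' dvd (\<alpha> - \<alpha>') * X'"
    by simp
  then have "Y' dvd \<alpha> - \<alpha>'"
    using assms(3) by (simp add: coprime_commute coprime_dvd_mult_left_iff)
  then have \<alpha>: "\<alpha> = \<alpha>'"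
    using eq_if_dvd_diff_in_range assms by blast
  then have "\<beta> = \<beta>'"
    using XY assms by simp
  with \<alpha> \<gamma> show ?thesis
    by simp
qed

lemma sg3_normal_form_mem_iff:
  fixes d x' y' z :: nat and \<alpha>\<^sub>0 \<beta>\<^sub>0 \<alpha> \<beta> \<gamma> :: int
  assumes "0 < d" "coprime d z" "coprime x' y'"
    and z: "int z = \<alpha>\<^sub>0 * int x' + \<beta>\<^sub>0 * int y'" "0 \<le> \<alpha>\<^sub>0" "0 \<le> \<beta>\<^sub>0"
    and bounds: "0 \<le> \<alpha>" "\<alpha> < int y'" "0 \<le> \<gamma>" "\<gamma> < int d"
  shows "\<alpha> * int (d * x') + \<beta> * int (d * y') + \<gamma> * int z \<in> sg3 (d * x') (d * y') z \<longleftrightarrow> 0 \<le> \<beta>"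
proof
  assume "0 \<le> \<beta>"
  then show "\<alpha> * int (d * x') + \<beta> * int (d * y') + \<gamma> * int z \<in> sg3 (d * x') (d * y') z"
    using bounds by (intro sg3_memI) simp_all
next
  assume "\<alpha> * int (d * x') + \<beta> * int (d * y') + \<gamma> * int z \<in> sg3 (d * x') (d * y') z"
  then obtain A B C :: nat where ABC:
    "\<alpha> * int (d * x') + \<beta> * int (d * y') + \<gamma> * int z
      = int A * int (d * x') + int B * int (d * y') + int C * int z"
    by (rule sg3_E)
  \<comment> \<open>Bring the representation A x + B y + C z into normal form: first trade multiples of d z
      for multiples of x and y, then multiples of y' x for multiples of y.\<close>
  define C\<^sub>1 C\<^sub>2 where "C\<^sub>1 = int C mod int d" and "C\<^sub>2 = int C div int d"
  define A' where "A' = int A + C\<^sub>2 * \<alpha>\<^sub>0"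
  define A\<^sub>1 A\<^sub>2 where "A\<^sub>1 = A' mod int y'" and "A\<^sub>2 = A' div int y'"
  have C: "int C = C\<^sub>1 + C\<^sub>2 * int d" and A': "A' = A\<^sub>1 + A\<^sub>2 * int y'"
    unfolding C\<^sub>1_def C\<^sub>2_def A\<^sub>1_def A\<^sub>2_def by simp_all
  have dz: "int d * int z = \<alpha>\<^sub>0 * int (d * x') + \<beta>\<^sub>0 * int (d * y')"
    using z(1) by (simp add: algebra_simps)
  have "int C * int z = C\<^sub>1 * int z + C\<^sub>2 * (int d * int z)"
    unfolding C by (simp add: algebra_simps)
  moreover have "A' * int (d * x') = A\<^sub>1 * int (d * x') + (A\<^sub>2 * int x') * int (d * y')"
    unfolding A' by (simp add: algebra_simps)
  ultimately have eq: "\<alpha> * (int d * int x') + \<beta> * (int d * int y') + \<gamma> * int z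
      = A\<^sub>1 * (int d * int x') + (int B + C\<^sub>2 * \<beta>\<^sub>0 + A\<^sub>2 * int x') * (int d * int y') + C\<^sub>1 * int z"
    using ABC dz unfolding A'_def by (simp add: algebra_simps)
  have "coprime (int z) (int d)" "coprime (int x') (int y')"
    using assms(2,3) by (simp_all add: coprime_commute)
  moreover have "0 \<le> A\<^sub>1" "A\<^sub>1 < int y'" "0 \<le> C\<^sub>1" "C\<^sub>1 < int d"
    using bounds unfolding A\<^sub>1_def C\<^sub>1_def by simp_all
  ultimately have "\<beta> = int B + C\<^sub>2 * \<beta>\<^sub>0 + A\<^sub>2 * int x'"
    using normal_form_unique[OF _ _ _ eq] assms(1) bounds by simp
  moreover have "0 \<le> C\<^sub>2" "0 \<le> A\<^sub>2"
    using assms(1) bounds z unfolding C\<^sub>2_def A\<^sub>2_def A'_def by (simp_all add: pos_imp_zdiv_nonneg_iff)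
  ultimately show "0 \<le> \<beta>"
    using z(3) by simp
qed

lemma symmetric_sg_of_normal_form:
  fixes S :: "int set" and X Y Z A C :: int
  assumes nonneg: "\<And>w. w \<in> S \<Longrightarrow> 0 \<le> w"
    and nf: "\<And>w. \<exists>\<alpha> \<beta> \<gamma>. w = \<alpha> * X + \<beta> * Y + \<gamma> * Z \<and> 0 \<le> \<alpha> \<and> \<alpha> < A \<and> 0 \<le> \<gamma> \<and> \<gamma> < C"
    and mem: "\<And>\<alpha> \<beta> \<gamma>. 0 \<le> \<alpha> \<Longrightarrow> \<alpha> < A \<Longrightarrow> 0 \<le> \<gamma> \<Longrightarrow> \<gamma> < C \<Longrightarrow>
      \<alpha> * X + \<beta> * Y + \<gamma> * Z \<in> S \<longleftrightarrow> 0 \<le> \<beta>"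
  shows "symmetric_sg S"
proof -
  define F where "F = (A - 1) * X + (- 1) * Y + (C - 1) * Z"
  have "0 < A" "0 < C"
    using nf[of 0] by auto
  then have F: "F \<notin> S"
    unfolding F_def using mem[of "A - 1" "C - 1" "- 1"] by simp
  have reflect: "F - w \<in> S" if "w \<notin> S" for w
  proof -
    obtain \<alpha> \<beta> \<gamma> where w: "w = \<alpha> * X + \<beta> * Y + \<gamma> * Z" "0 \<le> \<alpha>" "\<alpha> < A" "0 \<le> \<gamma>" "\<gamma> < C"
      using nf by blast
    then have "\<beta> < 0"
      using that mem by force
    moreover have "F - w = (A - 1 - \<alpha>) * X + (- 1 - \<beta>) * Y + (C - 1 - \<gamma>) * Z"
      unfolding F_def w(1) by (simp add: algebra_simps)
    ultimately show ?thesis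
      using w mem[of "A - 1 - \<alpha>" "C - 1 - \<gamma>" "- 1 - \<beta>"] by simp
  qed
  have "(GREATEST y. y \<notin> S) = F"
  proof (rule Greatest_equality)
    show "w \<le> F" if "w \<notin> S" for w
      using nonneg[OF reflect[OF that]] by simp
  qed (rule F)
  then show ?thesis
    unfolding symmetric_sg_def using reflect by simp
qed

lemma nonneg_lincomb_if_cc_ge:
  fixes d x' y' z :: nat
  assumes "0 < y'" "0 < z" "coprime x' y'" and cc: "y' \<le> cc (d * x') (d * y') z"
  obtains \<alpha>\<^sub>0 \<beta>\<^sub>0 where "int z = \<alpha>\<^sub>0 * int x' + \<beta>\<^sub>0 * int y'" "0 \<le> \<alpha>\<^sub>0" "0 \<le> \<beta>\<^sub>0"
proof -
  obtain \<alpha>\<^sub>0 \<beta>\<^sub>0 where z: "int z = \<alpha>\<^sub>0 * int x' + \<beta>\<^sub>0 * int y'" "0 \<le> \<alpha>\<^sub>0" "\<alpha>\<^sub>0 < int y'"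
    using lincomb_bounded_coeff[of "int y'" "int x'"] assms(1,3) by auto
  have "0 \<le> \<beta>\<^sub>0"
  proof (rule ccontr)
    assume "\<not> 0 \<le> \<beta>\<^sub>0"
    then have "0 < \<alpha>\<^sub>0"
      using z assms(2) by (smt (verit) mult_nonneg_nonneg mult_nonpos_nonneg of_nat_0_le_iff of_nat_0_less_iff)
    have "int (nat \<alpha>\<^sub>0 * (d * x')) = int (nat (- \<beta>\<^sub>0) * (d * y') + d * z)"
      using \<open>\<not> 0 \<le> \<beta>\<^sub>0\<close> \<open>0 < \<alpha>\<^sub>0\<close> z(1) by (simp add: algebra_simps)
    then have "nat \<alpha>\<^sub>0 * (d * x') \<in> gen2 (d * y') z"
      unfolding gen2_def of_nat_eq_iff by blast
    moreover have "nat \<alpha>\<^sub>0 < y'"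
      using z(2,3) by (simp add: nat_less_iff)
    then have "nat \<alpha>\<^sub>0 < cc (d * x') (d * y') z"
      using cc by linarith
    ultimately show False
      using not_mem_gen2_below_cc \<open>0 < \<alpha>\<^sub>0\<close> by simp
  qed
  with z show ?thesis
    using that by blast
qed

text \<open>If \<open>c\<^sub>x x\<close> is a multiple of \<open>y\<close> alone, then \<open>\<langle>x, y, z\<rangle>\<close> is a gluing of \<open>\<langle>x, y\<rangle>\<close> and \<open>\<langle>z\<rangle>\<close>
  along \<open>d = gcd x y\<close>: every integer has a unique normal form \<open>\<alpha> x + \<beta> y + \<gamma> z\<close> with
  \<open>0 \<le> \<alpha> < y/d\<close>, \<open>0 \<le> \<gamma> < d\<close>, and it lies in the semigroup exactly when \<open>\<beta> \<ge> 0\<close>.\<close>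

lemma symmetric_if_cc_multiple:
  fixes x y z k :: nat
  assumes pos: "0 < x" "0 < y" "0 < z" and gcd: "gcd x (gcd y z) = 1"
    and ck: "cc x y z * x = k * y"
  shows "symmetric_sg (sg3 x y z)"
proof -
  define d where "d = gcd x y"
  obtain x' y' where xy: "x = d * x'" "y = d * y'" and "coprime x' y'"
    using gcd_coprime_exists[of x y] pos unfolding d_def by (auto simp: mult.commute)
  have "0 < d"
    using pos unfolding d_def by simp
  have "0 < y'"
    using pos(2) unfolding xy(2) by simp
  have "coprime d z"
    using gcd unfolding d_def by (simp add: gcd.assoc coprime_iff_gcd_eq_1)
  have "y' dvd cc x y z * x'"
    using ck \<open>0 < d\<close> unfolding xy by (simp add: ac_simps)
  then have "y' \<le> cc x y z"
    using \<open>coprime x' y'\<close> cc_pos_mem_gen2[OF pos(2)]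
    by (simp add: coprime_commute coprime_dvd_mult_left_iff dvd_imp_le)
  then obtain \<alpha>\<^sub>0 \<beta>\<^sub>0 where z: "int z = \<alpha>\<^sub>0 * int x' + \<beta>\<^sub>0 * int y'" "0 \<le> \<alpha>\<^sub>0" "0 \<le> \<beta>\<^sub>0"
    using nonneg_lincomb_if_cc_ge \<open>0 < y'\<close> pos(3) \<open>coprime x' y'\<close> unfolding xy by metis
  show ?thesis
  proof (rule symmetric_sg_of_normal_form)
    show "w \<in> sg3 x y z \<Longrightarrow> 0 \<le> w" for w
      by (rule sg3_nonneg)
    show "\<exists>\<alpha> \<beta> \<gamma>. w = \<alpha> * int x + \<beta> * int y + \<gamma> * int z \<and> 0 \<le> \<alpha> \<and> \<alpha> < int y' \<and> 0 \<le> \<gamma> \<and> \<gamma> < int d"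
      for w
    proof -
      obtain \<alpha> \<beta> \<gamma> where "w = \<alpha> * (int d * int x') + \<beta> * (int d * int y') + \<gamma> * int z"
        "0 \<le> \<alpha>" "\<alpha> < int y'" "0 \<le> \<gamma>" "\<gamma> < int d"
        by (rule normal_form_exists[of "int d" "int y'" "int z" "int x'" w])
          (use \<open>0 < d\<close> \<open>0 < y'\<close> \<open>coprime d z\<close> \<open>coprime x' y'\<close> in \<open>simp_all add: coprime_commute\<close>)
      then show ?thesis
        unfolding xy by auto
    qed
    show "\<alpha> * int x + \<beta> * int y + \<gamma> * int z \<in> sg3 x y z \<longleftrightarrow> 0 \<le> \<beta>"
      if "0 \<le> \<alpha>" "\<alpha> < int y'" "0 \<le> \<gamma>" "\<gamma> < int d" for \<alpha> \<beta> \<gamma>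
      unfolding xy using sg3_normal_form_mem_iff \<open>0 < d\<close> \<open>coprime d z\<close> \<open>coprime x' y'\<close> z that
      by blast
  qed
qed

section \<open>The relations \<open>c\<^sub>i n\<^sub>i = r\<^sub>i\<^sub>j n\<^sub>j + r\<^sub>i\<^sub>k n\<^sub>k\<close>\<close>

lemma cc_rep_coeff_le:
  fixes x y z a b a' b' :: nat
  assumes "0 < x" "0 < z"
    and rep: "cc x y z * x = a * y + b * z" and rep': "cc x y z * x = a' * y + b' * z"
    and "0 < b" and pure: "\<forall>k. cc y x z * y \<noteq> k * z"
  shows "a \<le> a'"
proof (rule ccontr)
  assume "\<not> a \<le> a'"
  then obtain t where t: "a = a' + t" "0 < t"
    using less_imp_add_positive[of a' a] by auto
  define c c' where "c = cc x y z" and "c' = cc y x z"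
  have "t * y + b * z = b' * z"
    using rep rep' t(1) by (simp add: algebra_simps)
  then have "t * y = (b' - b) * z"
    by (simp add: diff_mult_distrib)
  then have "t * y \<in> gen2 x z"
    unfolding gen2_def by (intro CollectI exI[of _ 0] exI[of _ "b' - b"]) simp
  then have "c' \<le> t"
    unfolding c'_def using t(2) by (rule cc_le[rotated])
  obtain u v where uv: "c' * y = u * x + v * z"
    using cc_pos_mem_gen2[OF \<open>0 < x\<close>, of y z] unfolding c'_def gen2_def by auto
  have "0 < u"
  proof (rule ccontr)
    assume "\<not> 0 < u"
    then have "cc y x z * y = v * z"
      using uv unfolding c'_def by simp
    with pure show False
      by blast
  qed
  show False
  proof (cases "u < c")
    case True
    have "(c - u) * x + u * x = c * x"
      using True by (simp flip: add_mult_distrib)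
    moreover have "(a - c') * y + c' * y = a * y"
      using \<open>c' \<le> t\<close> t(1) by (simp flip: add_mult_distrib)
    ultimately have "(c - u) * x = (a - c') * y + (b + v) * z"
      using rep uv unfolding c_def by (simp add: add_mult_distrib)
    then have "(c - u) * x \<in> gen2 y z"
      unfolding gen2_def by blast
    then show False
      using not_mem_gen2_below_cc[of "c - u" x y z] True \<open>0 < u\<close> unfolding c_def by simp
  next
    case False
    have "c' * y \<le> a * y"
      using \<open>c' \<le> t\<close> t(1) by simp
    moreover have "0 < b * z"
      using \<open>0 < b\<close> \<open>0 < z\<close> by simp
    moreover have "c * x \<le> u * x"
      using False by simp
    ultimately show False
      using rep uv unfolding c_def by linarith
  qed
qed

lemma rr_spec:
  fixes x y z :: nat
  assumes "0 < x" "0 < y" "0 < z"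
    and not_y: "\<forall>k. cc x y z * x \<noteq> k * y" and not_z: "\<forall>k. cc x y z * x \<noteq> k * z"
    and pure: "\<forall>k. cc y x z * y \<noteq> k * z"
  shows "0 < fst (rr x y z) \<and> 0 < snd (rr x y z) \<and>
    cc x y z * x = fst (rr x y z) * y + snd (rr x y z) * z"
proof -
  let ?P = "\<lambda>(a, b). 0 < a \<and> 0 < b \<and> cc x y z * x = a * y + b * z"
  obtain a b where ab: "cc x y z * x = a * y + b * z"
    using cc_pos_mem_gen2[OF \<open>0 < y\<close>, of x z] unfolding gen2_def by auto
  have "0 < a"
    using not_z ab by (metis add_0 gr0I mult_zero_left)
  have "0 < b"
    using not_y ab by (metis add_0_right gr0I mult_zero_left)
  have "\<exists>!p. ?P p"
  proof (rule ex1I[of _ "(a, b)"])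
    show "?P (a, b)"
      using \<open>0 < a\<close> \<open>0 < b\<close> ab by simp
    fix p
    assume "?P p"
    then obtain a' b' where p: "p = (a', b')" "0 < b'" "cc x y z * x = a' * y + b' * z"
      by (cases p) auto
    have "a = a'"
      using cc_rep_coeff_le[OF \<open>0 < x\<close> \<open>0 < z\<close> ab p(3) \<open>0 < b\<close> pure]
        cc_rep_coeff_le[OF \<open>0 < x\<close> \<open>0 < z\<close> p(3) ab p(2) pure] by simp
    with ab p(3) \<open>0 < z\<close> show "p = (a, b)"
      unfolding p(1) by simp
  qed
  then have "?P (rr x y z)"
    unfolding rr_def by (rule theI')
  then show ?thesis
    by (simp add: case_prod_beta)
qed

lemma coeff_sum_lt_of_relation:
  fixes c r s n m m' :: int
  assumes "c * n = r * m + s * m'" "0 < n" "n < m" "n < m'" "0 < r" "0 < s"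
  shows "r + s < c"
proof -
  have "(r + s) * n < c * n"
    using assms by (simp add: algebra_simps add_strict_mono)
  then show ?thesis
    using assms(2) by (simp add: mult_less_cancel_right)
qed

lemma coeff_sum_gt_of_relation:
  fixes c r s n m m' :: int
  assumes "c * n = r * m + s * m'" "0 < n" "m < n" "m' < n" "0 < r" "0 < s"
  shows "c < r + s"
proof -
  have "c * n < (r + s) * n"
    using assms by (simp add: algebra_simps add_strict_mono)
  then show ?thesis
    using assms(2) by (simp add: mult_less_cancel_right)
qed

text \<open>Eliminating \<open>N3\<close>, resp. \<open>N1\<close>, between the two relations gives
  \<open>(c1 c3 - r13 r31) N1 = (c3 r12 + r13 r32) N2\<close> and \<open>(c1 c3 - r13 r31) N3 = (c1 r32 + r12 r31) N2\<close>.\<close>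

lemma delta_cross_bounds:
  fixes N1 N2 N3 c1 r12 r13 c3 r31 r32 :: int
  assumes N: "0 < N1" "N1 < N2" "N2 < N3"
    and nonneg: "0 \<le> r12" "0 \<le> r13" "0 \<le> r31" "0 \<le> r32" "0 \<le> c1" "0 \<le> c3"
    and E1: "c1 * N1 = r12 * N2 + r13 * N3" and E3: "c3 * N3 = r31 * N1 + r32 * N2"
  shows "(r31 + r32 - c3) * r13 \<le> (c1 - r12 - r13) * c3"
    "(c1 - r12 - r13) * r31 \<le> (r31 + r32 - c3) * c1"
proof -
  define X where "X = c1 * c3 - r13 * r31"
  have "X * N1 = (c3 * r12 + r13 * r32) * N2"
  proof -
    have "c3 * (c1 * N1) = c3 * (r12 * N2 + r13 * N3)" "r13 * (c3 * N3) = r13 * (r31 * N1 + r32 * N2)"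
      using E1 E3 by simp_all
    then show ?thesis
      unfolding X_def by (simp add: algebra_simps)
  qed
  moreover have "(c3 * r12 + r13 * r32) * N1 \<le> (c3 * r12 + r13 * r32) * N2"
    using nonneg N by (simp add: mult_left_mono)
  ultimately have "(c3 * r12 + r13 * r32) * N1 \<le> X * N1"
    by simp
  then have "c3 * r12 + r13 * r32 \<le> X"
    using N by (simp add: mult_le_cancel_right)
  then show "(r31 + r32 - c3) * r13 \<le> (c1 - r12 - r13) * c3"
    unfolding X_def by (simp add: algebra_simps)
  have "X * N3 = (c1 * r32 + r12 * r31) * N2"
  proof -
    have "c1 * (c3 * N3) = c1 * (r31 * N1 + r32 * N2)" "r31 * (c1 * N1) = r31 * (r12 * N2 + r13 * N3)"
      using E1 E3 by simp_all
    then show ?thesis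
      unfolding X_def by (simp add: algebra_simps)
  qed
  moreover have "(c1 * r32 + r12 * r31) * N2 \<le> (c1 * r32 + r12 * r31) * N3"
    using nonneg N by (simp add: mult_left_mono)
  ultimately have "X * N3 \<le> (c1 * r32 + r12 * r31) * N3"
    by simp
  then have "X \<le> c1 * r32 + r12 * r31"
    using N by (simp add: mult_le_cancel_right)
  then show "(c1 - r12 - r13) * r31 \<le> (r31 + r32 - c3) * c1"
    unfolding X_def by (simp add: algebra_simps)
qed

section \<open>Bezout couples\<close>

lemma ex1_bezout_couple_snd:
  fixes D1 D3 i :: int
  assumes "0 < D1" "coprime D1 D3"
  shows "\<exists>!p. (\<lambda>(a, b). a * D1 + b * D3 = i \<and> 0 < b \<and> b \<le> D1) p"
proof -
  have "coprime D3 D1"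
    using assms(2) by (simp add: coprime_commute)
  then obtain b\<^sub>0 a where ab: "i = b\<^sub>0 * D3 + a * D1" "0 \<le> b\<^sub>0" "b\<^sub>0 < D1"
    using lincomb_bounded_coeff[OF assms(1)] by blast
  \<comment> \<open>shift the representative of \<open>b\<close> from \<open>[0, D1)\<close> into \<open>(0, D1]\<close>\<close>
  define b where "b = (if b\<^sub>0 = 0 then D1 else b\<^sub>0)"
  define a' where "a' = (if b\<^sub>0 = 0 then a - D3 else a)"
  show ?thesis
  proof (rule ex1I[of _ "(a', b)"])
    show "(\<lambda>(a, b). a * D1 + b * D3 = i \<and> 0 < b \<and> b \<le> D1) (a', b)"
      using ab assms(1) unfolding a'_def b_def by (auto simp: algebra_simps)
    fix p
    assume "(\<lambda>(a, b). a * D1 + b * D3 = i \<and> 0 < b \<and> b \<le> D1) p"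
    then obtain a'' b'' where p: "p = (a'', b'')" "a'' * D1 + b'' * D3 = i" "0 < b''" "b'' \<le> D1"
      by (cases p) auto
    have eq: "a' * D1 + b * D3 = a'' * D1 + b'' * D3"
      using ab p(2) unfolding a'_def b_def by (auto simp: algebra_simps)
    then have "(b - b'') * D3 = D1 * (a'' - a')"
      by (simp add: algebra_simps)
    then have "D1 dvd (b - b'') * D3"
      by simp
    then have "D1 dvd (b - 1) - (b'' - 1)"
      using assms(2) by (simp add: coprime_dvd_mult_left_iff)
    then have "b = b''"
      using eq_if_dvd_diff_in_range[of D1 "b - 1" "b'' - 1"] ab p unfolding b_def by auto
    then show "p = (a', b)"
      using eq p(1) assms(1) by simp
  qed
qed

lemma ex1_bezout_couple_fst:
  fixes D1 D3 i :: int
  assumes "0 < D3" "coprime D1 D3"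
  shows "\<exists>!p. (\<lambda>(a, b). a * D1 + b * D3 = i \<and> 0 < a \<and> a \<le> D3) p"
proof -
  let ?Q = "\<lambda>(b, a). b * D3 + a * D1 = i \<and> 0 < a \<and> a \<le> D3"
  have "coprime D3 D1"
    using assms(2) by (simp add: coprime_commute)
  then have "\<exists>!q. ?Q q"
    by (rule ex1_bezout_couple_snd[OF assms(1)])
  then obtain q where q: "?Q q" and unique: "\<forall>q'. ?Q q' \<longrightarrow> q' = q"
    by (rule ex1E)
  obtain b a where ba: "q = (b, a)"
    by (cases q)
  show ?thesis
  proof (rule ex1I[of _ "(a, b)"])
    show "(\<lambda>(a, b). a * D1 + b * D3 = i \<and> 0 < a \<and> a \<le> D3) (a, b)"
      using q ba by (simp add: add.commute)
    fix p
    assume "(\<lambda>(a, b). a * D1 + b * D3 = i \<and> 0 < a \<and> a \<le> D3) p"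
    then have "?Q (prod.swap p)"
      by (cases p) (simp add: add.commute)
    then have "prod.swap p = q"
      using unique by blast
    then show "p = (a, b)"
      using ba by (cases p) simp
  qed
qed

lemma bezout_coeff_nonpos:
  fixes a b D1 D3 :: int
  assumes "0 < D1" "0 < D3" "0 < b" "a * D1 + b * D3 \<le> max D1 D3"
  shows "a \<le> 0"
proof (rule ccontr)
  assume "\<not> a \<le> 0"
  then have "D1 \<le> a * D1" "D3 \<le> b * D3"
    using assms by simp_all
  then show False
    using assms by linarith
qed

lemma cross_mult_le_trans:
  fixes p q r s u v :: int
  assumes "0 < v" "0 \<le> q" "0 \<le> r" "p * v \<le> q * u" "u * r \<le> v * s"
  shows "p * r \<le> q * s"
proof -
  have "v * (p * r) = (p * v) * r"
    by (simp add: ac_simps)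
  also have "\<dots> \<le> (q * u) * r"
    using assms by (simp add: mult_right_mono)
  also have "\<dots> \<le> q * (v * s)"
    using assms by (metis mult.assoc mult_left_mono)
  finally show ?thesis
    using assms(1) by (simp add: ac_simps)
qed

definition sign_compatible :: "int \<Rightarrow> int \<Rightarrow> bool" where
  "sign_compatible a b \<longleftrightarrow> (0 \<le> a \<and> 0 \<le> b) \<or> (a \<le> 0 \<and> b \<le> 0)"

text \<open>In a sign-compatible coordinate the positive part of each summand is dominated by that of
  the sum; in the one remaining coordinate the summand with the larger entry does the job.\<close>

lemma le3_pos_part_add:
  fixes p1 p2 p3 q1 q2 q3 :: int
  assumes "sign_compatible p1 q1 \<and> sign_compatible p2 q2 \<or> sign_compatible p1 q1 \<and> sign_compatible p3 q3
    \<or> sign_compatible p2 q2 \<and> sign_compatible p3 q3"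
  shows "le3 (pos_part (p1, p2, p3)) (pos_part ((p1, p2, p3) + (q1, q2, q3))) \<or>
    le3 (pos_part (q1, q2, q3)) (pos_part ((p1, p2, p3) + (q1, q2, q3)))"
  using assms unfolding sign_compatible_def le3_def pos_part_def by auto

lemma tau_add: "tau n1 n2 n3 (p + q) = tau n1 n2 n3 p + tau n1 n2 n3 q"
  unfolding tau_def by (cases p, cases q, cases "v1 n1 n2 n3", cases "v3 n1 n2 n3")
    (simp add: algebra_simps)

locale nonsymmetric_triple =
  fixes n1 n2 n3 :: nat
  assumes pos: "0 < n1" and lt12: "n1 < n2" and lt23: "n2 < n3"
    and gcd: "gcd n1 (gcd n2 n3) = 1"
    and nonsymmetric: "\<not> symmetric_sg (sg3 n1 n2 n3)"
begin

abbreviation "c\<^sub>1 \<equiv> int (cc n1 n2 n3)"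
abbreviation "r\<^sub>1\<^sub>2 \<equiv> int (fst (rr n1 n2 n3))"
abbreviation "r\<^sub>1\<^sub>3 \<equiv> int (snd (rr n1 n2 n3))"
abbreviation "c\<^sub>3 \<equiv> int (cc n3 n1 n2)"
abbreviation "r\<^sub>3\<^sub>1 \<equiv> int (fst (rr n3 n1 n2))"
abbreviation "r\<^sub>3\<^sub>2 \<equiv> int (snd (rr n3 n1 n2))"
abbreviation "\<delta>\<^sub>1 \<equiv> delta1 n1 n2 n3"
abbreviation "\<delta>\<^sub>3 \<equiv> delta3 n1 n2 n3"

lemma cc_not_multiple:
  assumes "(x, y, z) \<in> {(n1, n2, n3), (n1, n3, n2), (n2, n1, n3), (n2, n3, n1), (n3, n1, n2), (n3, n2, n1)}"
  shows "cc x y z * x \<noteq> k * y"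
proof
  assume "cc x y z * x = k * y"
  moreover have "0 < x" "0 < y" "0 < z" "gcd x (gcd y z) = 1"
    using assms pos lt12 lt23 gcd by (auto simp: gcd.commute gcd.left_commute)
  moreover have "sg3 x y z = sg3 n1 n2 n3"
    using assms sg3_swap12 sg3_swap23 by auto
  ultimately show False
    using symmetric_if_cc_multiple nonsymmetric by metis
qed

lemma c1_relation: "0 < r\<^sub>1\<^sub>2 \<and> 0 < r\<^sub>1\<^sub>3 \<and> c\<^sub>1 * int n1 = r\<^sub>1\<^sub>2 * int n2 + r\<^sub>1\<^sub>3 * int n3"
proof -
  have "\<forall>k. cc n1 n2 n3 * n1 \<noteq> k * n2" "\<forall>k. cc n1 n2 n3 * n1 \<noteq> k * n3"
    "\<forall>k. cc n2 n1 n3 * n2 \<noteq> k * n3"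
    using cc_not_multiple[of n1 n2 n3] cc_not_multiple[of n1 n3 n2] cc_not_multiple[of n2 n3 n1]
    by (simp_all add: cc_commute[of n1 n3] cc_commute[of n2 n3])
  then have "0 < fst (rr n1 n2 n3) \<and> 0 < snd (rr n1 n2 n3) \<and>
      cc n1 n2 n3 * n1 = fst (rr n1 n2 n3) * n2 + snd (rr n1 n2 n3) * n3"
    using pos lt12 lt23 by (intro rr_spec) simp_all
  then show ?thesis
    by (metis of_nat_0_less_iff of_nat_add of_nat_mult)
qed

lemma c3_relation: "0 < r\<^sub>3\<^sub>1 \<and> 0 < r\<^sub>3\<^sub>2 \<and> c\<^sub>3 * int n3 = r\<^sub>3\<^sub>1 * int n1 + r\<^sub>3\<^sub>2 * int n2"
proof -
  have "\<forall>k. cc n3 n1 n2 * n3 \<noteq> k * n1" "\<forall>k. cc n3 n1 n2 * n3 \<noteq> k * n2"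
    "\<forall>k. cc n1 n3 n2 * n1 \<noteq> k * n2"
    using cc_not_multiple[of n3 n1 n2] cc_not_multiple[of n3 n2 n1] cc_not_multiple[of n1 n2 n3]
    by (simp_all add: cc_commute[of n3 n2] cc_commute[of n1 n3])
  then have "0 < fst (rr n3 n1 n2) \<and> 0 < snd (rr n3 n1 n2) \<and>
      cc n3 n1 n2 * n3 = fst (rr n3 n1 n2) * n1 + snd (rr n3 n1 n2) * n2"
    using pos lt12 lt23 by (intro rr_spec) simp_all
  then show ?thesis
    by (metis of_nat_0_less_iff of_nat_add of_nat_mult)
qed

lemma delta_props:
  shows delta1_pos: "0 < \<delta>\<^sub>1" and delta3_pos: "0 < \<delta>\<^sub>3"
    and delta3_r13_le: "\<delta>\<^sub>3 * r\<^sub>1\<^sub>3 \<le> \<delta>\<^sub>1 * c\<^sub>3"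
    and delta1_r31_le: "\<delta>\<^sub>1 * r\<^sub>3\<^sub>1 \<le> \<delta>\<^sub>3 * c\<^sub>1"
proof -
  have N: "0 < int n1" "int n1 < int n2" "int n2 < int n3"
    using pos lt12 lt23 by simp_all
  show "0 < \<delta>\<^sub>1" "0 < \<delta>\<^sub>3"
    unfolding delta1_def delta3_def
    using coeff_sum_lt_of_relation[of c\<^sub>1 "int n1" r\<^sub>1\<^sub>2 "int n2" r\<^sub>1\<^sub>3 "int n3"]
      coeff_sum_gt_of_relation[of c\<^sub>3 "int n3" r\<^sub>3\<^sub>1 "int n1" r\<^sub>3\<^sub>2 "int n2"] N c1_relation c3_relation
    by simp_all
  show "\<delta>\<^sub>3 * r\<^sub>1\<^sub>3 \<le> \<delta>\<^sub>1 * c\<^sub>3" "\<delta>\<^sub>1 * r\<^sub>3\<^sub>1 \<le> \<delta>\<^sub>3 * c\<^sub>1"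
    unfolding delta1_def delta3_def
    using delta_cross_bounds[OF N, of r\<^sub>1\<^sub>2 r\<^sub>1\<^sub>3 r\<^sub>3\<^sub>1 r\<^sub>3\<^sub>2 c\<^sub>1 c\<^sub>3] c1_relation c3_relation
    by (simp_all add: mult.commute)
qed

lemma tau_Pair:
  "tau n1 n2 n3 (a, b) = (a * c\<^sub>1 + b * r\<^sub>3\<^sub>1, b * r\<^sub>3\<^sub>2 - a * r\<^sub>1\<^sub>2, - (a * r\<^sub>1\<^sub>3 + b * c\<^sub>3))"
  unfolding tau_def v1_def v3_def by simp

context
  assumes coprime: "coprime \<delta>\<^sub>1 \<delta>\<^sub>3"
begin

lemma lam_spec:
  "fst (lam n1 n2 n3 t) * \<delta>\<^sub>1 + snd (lam n1 n2 n3 t) * \<delta>\<^sub>3 = t \<and>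
    0 < snd (lam n1 n2 n3 t) \<and> snd (lam n1 n2 n3 t) \<le> \<delta>\<^sub>1"
proof -
  have "(\<lambda>(a, b). a * \<delta>\<^sub>1 + b * \<delta>\<^sub>3 = t \<and> 0 < b \<and> b \<le> \<delta>\<^sub>1) (lam n1 n2 n3 t)"
    unfolding lam_def by (rule theI'[OF ex1_bezout_couple_snd[OF delta1_pos coprime]])
  then show ?thesis
    by (simp add: case_prod_beta)
qed

lemma mu_spec:
  "fst (mu n1 n2 n3 t) * \<delta>\<^sub>1 + snd (mu n1 n2 n3 t) * \<delta>\<^sub>3 = t \<and>
    0 < fst (mu n1 n2 n3 t) \<and> fst (mu n1 n2 n3 t) \<le> \<delta>\<^sub>3"
proof -
  have "(\<lambda>(a, b). a * \<delta>\<^sub>1 + b * \<delta>\<^sub>3 = t \<and> 0 < a \<and> a \<le> \<delta>\<^sub>3) (mu n1 n2 n3 t)"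
    unfolding mu_def by (rule theI'[OF ex1_bezout_couple_fst[OF delta3_pos coprime]])
  then show ?thesis
    by (simp add: case_prod_beta)
qed

lemma tau_lam_signs:
  assumes "tau n1 n2 n3 (lam n1 n2 n3 t) = (p1, p2, p3)" "1 \<le> t" "t \<le> max \<delta>\<^sub>1 \<delta>\<^sub>3"
  shows "0 \<le> p2" "p3 \<le> 0"
proof -
  obtain a b where ab: "lam n1 n2 n3 t = (a, b)"
    by (cases "lam n1 n2 n3 t")
  then have t: "a * \<delta>\<^sub>1 + b * \<delta>\<^sub>3 = t" "0 < b"
    using lam_spec[of t] by simp_all
  then have "a \<le> 0"
    using bezout_coeff_nonpos[OF delta1_pos delta3_pos] assms(3) by simp
  have ratio: "(- a) * \<delta>\<^sub>1 \<le> b * \<delta>\<^sub>3"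
    using t assms(2) by simp
  have "(- a) * r\<^sub>1\<^sub>3 \<le> b * c\<^sub>3"
    by (rule cross_mult_le_trans[OF delta1_pos _ _ ratio delta3_r13_le]) (use \<open>0 < b\<close> in simp_all)
  moreover have "0 \<le> (- a) * r\<^sub>1\<^sub>2" "0 \<le> b * r\<^sub>3\<^sub>2"
    using \<open>a \<le> 0\<close> \<open>0 < b\<close> by (simp_all add: mult_nonpos_nonneg)
  ultimately show "0 \<le> p2" "p3 \<le> 0"
    using assms(1) unfolding ab tau_Pair by simp_all
qed

lemma tau_mu_signs:
  assumes "tau n1 n2 n3 (mu n1 n2 n3 t) = (p1, p2, p3)" "1 \<le> t" "t \<le> max \<delta>\<^sub>1 \<delta>\<^sub>3"
  shows "0 \<le> p1" "p2 \<le> 0"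
proof -
  obtain a b where ab: "mu n1 n2 n3 t = (a, b)"
    by (cases "mu n1 n2 n3 t")
  then have t: "b * \<delta>\<^sub>3 + a * \<delta>\<^sub>1 = t" "0 < a"
    using mu_spec[of t] by (simp_all add: add.commute)
  then have "b \<le> 0"
    using bezout_coeff_nonpos[OF delta3_pos delta1_pos] assms(3) by (simp add: max.commute)
  have ratio: "(- b) * \<delta>\<^sub>3 \<le> a * \<delta>\<^sub>1"
    using t assms(2) by simp
  have "(- b) * r\<^sub>3\<^sub>1 \<le> a * c\<^sub>1"
    by (rule cross_mult_le_trans[OF delta3_pos _ _ ratio delta1_r31_le]) (use \<open>0 < a\<close> in simp_all)
  moreover have "0 \<le> (- b) * r\<^sub>3\<^sub>2" "0 \<le> a * r\<^sub>1\<^sub>2"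
    using \<open>b \<le> 0\<close> \<open>0 < a\<close> by (simp_all add: mult_nonpos_nonneg)
  ultimately show "0 \<le> p1" "p2 \<le> 0"
    using assms(1) unfolding ab tau_Pair by simp_all
qed

lemma tau_couples_sign_compatible:
  assumes "x \<in> {lam n1 n2 n3, mu n1 n2 n3}" "j \<in> {1..max \<delta>\<^sub>1 \<delta>\<^sub>3}" "k \<in> {1..max \<delta>\<^sub>1 \<delta>\<^sub>3}"
    and tau_j: "tau n1 n2 n3 (x j) = (p1, p2, p3)" and tau_k: "tau n1 n2 n3 (x k) = (q1, q2, q3)"
  shows "sign_compatible p1 q1 \<and> sign_compatible p2 q2 \<or> sign_compatible p1 q1 \<and> sign_compatible p3 q3
    \<or> sign_compatible p2 q2 \<and> sign_compatible p3 q3"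
proof -
  from assms(1) consider "x = lam n1 n2 n3" | "x = mu n1 n2 n3"
    by blast
  then show ?thesis
  proof cases
    case 1
    then have "0 \<le> p2" "p3 \<le> 0" "0 \<le> q2" "q3 \<le> 0"
      using tau_lam_signs[OF tau_j[unfolded 1]] tau_lam_signs[OF tau_k[unfolded 1]] assms(2,3) by auto
    then show ?thesis
      unfolding sign_compatible_def by simp
  next
    case 2
    then have "0 \<le> p1" "p2 \<le> 0" "0 \<le> q1" "q2 \<le> 0"
      using tau_mu_signs[OF tau_j[unfolded 2]] tau_mu_signs[OF tau_k[unfolded 2]] assms(2,3) by auto
    then show ?thesis
      unfolding sign_compatible_def by simp
  qed
qed

lemma reducible_bezout_couple_dominated:
  assumes "x \<in> {lam n1 n2 n3, mu n1 n2 n3}" "reducible x (max \<delta>\<^sub>1 \<delta>\<^sub>3) i"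
  shows "\<exists>l. 0 < l \<and> l < i \<and> le3 (pos_part (tau n1 n2 n3 (x l))) (pos_part (tau n1 n2 n3 (x i)))"
proof -
  obtain j k where jk: "j \<in> {1..max \<delta>\<^sub>1 \<delta>\<^sub>3}" "k \<in> {1..max \<delta>\<^sub>1 \<delta>\<^sub>3}" and split: "x i = x j + x k"
    using assms(2) unfolding reducible_def plus_prod_def by blast
  have bezout: "fst (x t) * \<delta>\<^sub>1 + snd (x t) * \<delta>\<^sub>3 = t" for t
    using assms(1) lam_spec mu_spec by auto
  have "i = j + k"
    using bezout[of i] bezout[of j] bezout[of k] unfolding split by (simp add: distrib_right)
  then have "0 < j \<and> j < i" "0 < k \<and> k < i"
    using jk by auto
  obtain p1 p2 p3 q1 q2 q3 where tau_j: "tau n1 n2 n3 (x j) = (p1, p2, p3)"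
    and tau_k: "tau n1 n2 n3 (x k) = (q1, q2, q3)"
    by (metis prod_cases3)
  have "tau n1 n2 n3 (x i) = (p1, p2, p3) + (q1, q2, q3)"
    unfolding split tau_add tau_j tau_k ..
  then show ?thesis
    using le3_pos_part_add[OF tau_couples_sign_compatible[OF assms(1) jk tau_j tau_k]] tau_j tau_k
      \<open>0 < j \<and> j < i\<close> \<open>0 < k \<and> k < i\<close> by metis
qed

end

end

theorem lemma2p14:
  fixes n1 n2 n3 :: nat and x :: "int \<Rightarrow> int \<times> int" and i :: int
  assumes "0 < n1" and "n1 < n2" and "n2 < n3"
    and "gcd n1 (gcd n2 n3) = 1"
    and "minimally_generated n1 n2 n3"
    and "\<not> symmetric_sg (sg3 n1 n2 n3)"
    and "gcd (delta1 n1 n2 n3) (delta3 n1 n2 n3) = 1"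
    and "x \<in> {lam n1 n2 n3, mu n1 n2 n3}"
    and "1 \<le> i" and "i \<le> max (delta1 n1 n2 n3) (delta3 n1 n2 n3)"
    and "reducible x (max (delta1 n1 n2 n3) (delta3 n1 n2 n3)) i"
  shows "\<exists>l. 0 < l \<and> l < i \<and>
           le3 (pos_part (tau n1 n2 n3 (x l))) (pos_part (tau n1 n2 n3 (x i)))"
proof -
  interpret nonsymmetric_triple n1 n2 n3
    using assms(1-4,6) by unfold_locales
  have "coprime (delta1 n1 n2 n3) (delta3 n1 n2 n3)"
    using assms(7) by (simp add: coprime_iff_gcd_eq_1)
  then show ?thesis
    using reducible_bezout_couple_dominated assms(8,11) by blast
qed

end
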